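(* Let $\Delta\in(0,1]$ and consider the two-armed bandit problem with a single (dummy) context, with warm-start cost vector $c^s_0=(0.5,\ 0.5+\Delta/2)$ and interaction cost vector $c^b_0=(0.5,\ 0.5-\Delta/2)$ (both deterministic). Run the warm-started UCB algorithm described in the context with $n_s$ warm-start examples and $n_b$ interaction rounds, where $n_b\ge\exp(\Delta^2 n_s/16)$. Then its regret $\sum_{t=1}^{n_b}\big(c^b_0(a_t)-c^b_0(2)\big)$ is $\Omega\big(\Delta\exp(\Delta^2 n_s/16)\big)$.
   Context: Warm-started UCB algorithm: the input is a set $S$ of $n_s$ warm-start examples, each with cost vector $c^s_0$, and a number $n_b$ of interaction rounds. For $t=1,2,\dots,n_b$: for $i\in\{1,2\}$ let $n_{i,t-1}=\sum_{s=1}^{t-1}\mathbf{1}(a_s=i)$ be the number of earlier rounds in which action $i$ was taken; compute the empirical mean cost $\hat\mu_{i,t}=\frac{n_s c^s_0(i)+\sum_{s=1}^{t-1}\mathbf{1}(a_s=i)\,c^b_0(i)}{n_s+n_{i,t-1}}$ and the lower confidence bound $\mathrm{LCB}_{i,t}=\hat\mu_{i,t}-2\sqrt{\frac{\ln t}{n_s+n_{i,t-1}}}$; take action $a_t=\arg\min_{i\in\{1,2\}}\mathrm{LCB}_{i,t}$ and observe the cost $c^b_0(a_t)$. The optimal action for the interaction costs is action $2$. *)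

theory Defs
  imports Complex_Main
begin

text \<open>Warm-started UCB for two actions 1 and 2. A history is the list [a_1, ..., a_(t-1)]
of previously taken actions. ns = number of warm-start examples, cs = warm-start cost
vector, cb = interaction cost vector (both deterministic).\<close>

definition ucb_count :: "nat list \<Rightarrow> nat \<Rightarrow> nat" where
  "ucb_count hist i = length (filter (\<lambda>a. a = i) hist)"

definition ucb_mean :: "nat \<Rightarrow> (nat \<Rightarrow> real) \<Rightarrow> (nat \<Rightarrow> real) \<Rightarrow> nat list \<Rightarrow> nat \<Rightarrow> real" where
  "ucb_mean ns cs cb hist i =
     (real ns * cs i + (\<Sum>s<length hist. if hist ! s = i then cb i else 0))
     / (real ns + real (ucb_count hist i))"

definition ucb_lcb :: "nat \<Rightarrow> (nat \<Rightarrow> real) \<Rightarrow> (nat \<Rightarrow> real) \<Rightarrow> nat list \<Rightarrow> nat \<Rightarrow> nat \<Rightarrow> real" where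
  "ucb_lcb ns cs cb hist t i =
     ucb_mean ns cs cb hist i - 2 * sqrt (ln (real t) / (real ns + real (ucb_count hist i)))"

definition ucb_choose :: "nat \<Rightarrow> (nat \<Rightarrow> real) \<Rightarrow> (nat \<Rightarrow> real) \<Rightarrow> nat list \<Rightarrow> nat \<Rightarrow> nat" where
  "ucb_choose ns cs cb hist t =
     (if ucb_lcb ns cs cb hist t 1 \<le> ucb_lcb ns cs cb hist t 2 then 1 else 2)"

fun ucb_history :: "nat \<Rightarrow> (nat \<Rightarrow> real) \<Rightarrow> (nat \<Rightarrow> real) \<Rightarrow> nat \<Rightarrow> nat list" where
  "ucb_history ns cs cb 0 = []"
| "ucb_history ns cs cb (Suc t) =
     (let hist = ucb_history ns cs cb t in hist @ [ucb_choose ns cs cb hist (Suc t)])"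

text \<open>The action a_t taken at round t (t >= 1).\<close>
definition ucb_action :: "nat \<Rightarrow> (nat \<Rightarrow> real) \<Rightarrow> (nat \<Rightarrow> real) \<Rightarrow> nat \<Rightarrow> nat" where
  "ucb_action ns cs cb t = last (ucb_history ns cs cb t)"

definition ucb_regret :: "nat \<Rightarrow> (nat \<Rightarrow> real) \<Rightarrow> (nat \<Rightarrow> real) \<Rightarrow> nat \<Rightarrow> real" where
  "ucb_regret ns cs cb nb = (\<Sum>t=1..nb. cb (ucb_action ns cs cb t) - cb 2)"

end

theory Submission
  imports Defs
begin

text \<open>The warm-start data make the optimal action 2 look worse than action 1 by a gap
  \<open>g = \<Delta>/2\<close>. While only action 1 is played, its empirical mean is exact, so
  \<open>LCB\<^sub>1 \<le> 1/2\<close>, whereas action 2 keeps the count \<open>n\<^sub>s\<close> and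
  \<open>LCB\<^sub>2 = 1/2 + g - 2 sqrt (ln t / n\<^sub>s) \<ge> 1/2\<close> as long as
  \<open>t \<le> exp (g\<^sup>2 n\<^sub>s / 4) = exp (\<Delta>\<^sup>2 n\<^sub>s / 16)\<close>. Hence the suboptimal action 1
  is played in each of the first \<open>\<lfloor>exp (\<Delta>\<^sup>2 n\<^sub>s / 16)\<rfloor>\<close> rounds, each costing \<open>\<Delta>/2\<close>.\<close>

lemma ucb_count_replicate: "ucb_count (replicate n a) i = (if i = a then n else 0)"
  unfolding ucb_count_def by simp

lemma ucb_mean_replicate_same:
  assumes "cs a = cb a" and "0 < ns + n"
  shows "ucb_mean ns cs cb (replicate n a) a = cs a"
proof -
  have "real ns + real n \<noteq> 0" using assms(2) by linarith
  then show ?thesis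
    using assms(1) unfolding ucb_mean_def ucb_count_replicate by (simp add: field_simps)
qed

lemma ucb_mean_replicate_other:
  assumes "i \<noteq> a" and "0 < ns"
  shows "ucb_mean ns cs cb (replicate n a) i = cs i"
  using assms unfolding ucb_mean_def ucb_count_replicate by simp

lemma ucb_choose_replicate_1:
  assumes "cs 1 = cb 1" and "cs 1 \<le> cs 2"
    and "ln (real (Suc n)) \<le> (cs 2 - cs 1)\<^sup>2 * real ns / 4"
  shows "ucb_choose ns cs cb (replicate n 1) (Suc n) = 1"
proof (cases "ns = 0")
  case True
  \<comment> \<open>Without warm start only round 1 qualifies, where both bounds are \<open>0\<close> and the tie goes to 1.\<close>
  with assms(3) have "n = 0" by simp
  with True show ?thesis
    unfolding ucb_choose_def ucb_lcb_def ucb_mean_def by (simp add: ucb_count_def)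
next
  case False
  let ?h = "replicate n (1::nat)"
  have "ucb_lcb ns cs cb ?h (Suc n) 1 \<le> cs 1"
    using False assms(1)
    by (simp add: ucb_lcb_def ucb_mean_replicate_same)
  also have "cs 1 \<le> ucb_lcb ns cs cb ?h (Suc n) 2"
  proof -
    have "ln (real (Suc n)) / real ns \<le> ((cs 2 - cs 1) / 2)\<^sup>2"
      using assms(3) False by (simp add: field_simps power2_eq_square)
    then have "sqrt (ln (real (Suc n)) / real ns) \<le> (cs 2 - cs 1) / 2"
      using assms(2) real_sqrt_le_mono by fastforce
    then show ?thesis
      using False by (simp add: ucb_lcb_def ucb_mean_replicate_other ucb_count_replicate)
  qed
  finally show ?thesis unfolding ucb_choose_def by simp
qed

lemma ucb_history_replicate_1:
  assumes "cs 1 = cb 1" and "cs 1 \<le> cs 2"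
    and "real t \<le> exp ((cs 2 - cs 1)\<^sup>2 * real ns / 4)"
  shows "ucb_history ns cs cb t = replicate t 1"
  using assms(3)
proof (induction t)
  case 0
  then show ?case by simp
next
  case (Suc n)
  then have "ln (real (Suc n)) \<le> ln (exp ((cs 2 - cs 1)\<^sup>2 * real ns / 4))"
    by (simp del: ln_exp)
  then have "ln (real (Suc n)) \<le> (cs 2 - cs 1)\<^sup>2 * real ns / 4"
    by simp
  with assms(1,2) have "ucb_choose ns cs cb (replicate n 1) (Suc n) = 1"
    by (rule ucb_choose_replicate_1)
  with Suc show ?case by (simp add: replicate_append_same)
qed

lemma ucb_action_eq_1:
  assumes "cs 1 = cb 1" and "cs 1 \<le> cs 2" and "1 \<le> t"
    and "real t \<le> exp ((cs 2 - cs 1)\<^sup>2 * real ns / 4)"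
  shows "ucb_action ns cs cb t = 1"
  using assms ucb_history_replicate_1[of cs cb t ns] by (simp add: ucb_action_def)

lemma ucb_regret_ge_initial_actions:
  assumes "\<And>i. cb 2 \<le> cb i" and "k \<le> nb"
    and "\<And>t. 1 \<le> t \<Longrightarrow> t \<le> k \<Longrightarrow> ucb_action ns cs cb t = a"
  shows "real k * (cb a - cb 2) \<le> ucb_regret ns cs cb nb"
proof -
  have "real k * (cb a - cb 2) = (\<Sum>t=1..k. cb (ucb_action ns cs cb t) - cb 2)"
    using assms(3) by simp
  also have "\<dots> \<le> ucb_regret ns cs cb nb"
    unfolding ucb_regret_def using assms(1,2) by (intro sum_mono2) auto
  finally show ?thesis .
qed

lemma nat_floor_between_half_and_self:
  fixes x :: real
  assumes "1 \<le> x"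
  shows "x / 2 \<le> real (nat \<lfloor>x\<rfloor>)" and "real (nat \<lfloor>x\<rfloor>) \<le> x"
proof -
  have "1 \<le> \<lfloor>x\<rfloor>" using assms by simp
  then have floor_eq: "real (nat \<lfloor>x\<rfloor>) = of_int \<lfloor>x\<rfloor>" by simp
  show "x / 2 \<le> real (nat \<lfloor>x\<rfloor>)" unfolding floor_eq
    using \<open>1 \<le> \<lfloor>x\<rfloor>\<close> real_of_int_floor_gt_diff_one[of x] by linarith
  show "real (nat \<lfloor>x\<rfloor>) \<le> x" unfolding floor_eq by linarith
qed

theorem mainTheorem2:
  "\<exists>C>0. \<forall>(\<Delta>::real) (ns::nat) (nb::nat).
     0 < \<Delta> \<and> \<Delta> \<le> 1 \<and> real nb \<ge> exp (\<Delta>\<^sup>2 * real ns / 16) \<longrightarrow>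
     ucb_regret ns (\<lambda>i. if i = 1 then 0.5 else 0.5 + \<Delta> / 2)
                   (\<lambda>i. if i = 1 then 0.5 else 0.5 - \<Delta> / 2) nb
       \<ge> C * \<Delta> * exp (\<Delta>\<^sup>2 * real ns / 16)"
proof (intro exI[of _ "1/4"] conjI allI impI)
  fix \<Delta> :: real and ns nb :: nat
  assume "0 < \<Delta> \<and> \<Delta> \<le> 1 \<and> real nb \<ge> exp (\<Delta>\<^sup>2 * real ns / 16)"
  then have \<Delta>: "0 < \<Delta>" and nb: "exp (\<Delta>\<^sup>2 * real ns / 16) \<le> real nb" by auto
  define cs where "cs = (\<lambda>i::nat. if i = 1 then 0.5 else 0.5 + \<Delta> / 2 :: real)"
  define cb where "cb = (\<lambda>i::nat. if i = 1 then 0.5 else 0.5 - \<Delta> / 2 :: real)"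
  define E where "E = exp (\<Delta>\<^sup>2 * real ns / 16)"
  define k where "k = nat \<lfloor>E\<rfloor>"
  have gap: "(cs 2 - cs 1)\<^sup>2 * real ns / 4 = \<Delta>\<^sup>2 * real ns / 16"
    by (simp add: cs_def power2_eq_square)
  have "1 \<le> E"
    unfolding E_def by simp
  note k_bounds = nat_floor_between_half_and_self[OF this, folded k_def]
  have "ucb_action ns cs cb t = 1" if "1 \<le> t" "t \<le> k" for t
  proof (rule ucb_action_eq_1)
    show "real t \<le> exp ((cs 2 - cs 1)\<^sup>2 * real ns / 4)"
      using that k_bounds(2) unfolding gap E_def by linarith
  qed (use that \<Delta> in \<open>simp_all add: cs_def cb_def\<close>)
  moreover have "k \<le> nb"
    using k_bounds(2) nb unfolding E_def by linarith
  ultimately have "real k * (cb 1 - cb 2) \<le> ucb_regret ns cs cb nb"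
    using \<Delta> by (intro ucb_regret_ge_initial_actions) (auto simp: cb_def)
  moreover have "1/4 * \<Delta> * E \<le> real k * (cb 1 - cb 2)"
    using k_bounds(1) \<Delta> by (simp add: cb_def field_simps)
  ultimately show "1/4 * \<Delta> * exp (\<Delta>\<^sup>2 * real ns / 16) \<le> ucb_regret ns
      (\<lambda>i. if i = 1 then 0.5 else 0.5 + \<Delta> / 2) (\<lambda>i. if i = 1 then 0.5 else 0.5 - \<Delta> / 2) nb"
    unfolding cs_def cb_def E_def by linarith
qed simp

end
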